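(* Let $w, t \in \mathbb{Z}$ be such that $2w + t$ is a multiple of $4$. Then there exists a morphism $f \in \mathbb{ROT}\mathrm{ang}(\uparrow, \uparrow)$ such that $W(f) = w$ and $T(f) = t$, and such that $f$, viewed as a tangle, is related to the identity (a single straight strand) by a general isotopy, i.e.\ by planar isotopies and Reidemeister moves of types I, II and III.
   Context: $\mathbb{ROT}\mathrm{ang}$ is the free (strict) braided pivotal category generated by one object $\uparrow$, whose adjoint (left and right adjoints coincide) is denoted $\downarrow$; by Freyd–Yetter, its morphisms are oriented tangles up to regular isotopy (isotopy generated by planar isotopies and Reidemeister moves II and III, but not Reidemeister I). Strands are oriented according to whether they are labelled $\uparrow$ or $\downarrow$. The structural morphisms are four oriented caps/cups: $\mathrm{cap}_r : I \to \uparrow \otimes \downarrow$, $\mathrm{cap}_l : I \to \downarrow \otimes \uparrow$, $\mathrm{cup}_r : \downarrow \otimes \uparrow \to I$, $\mathrm{cup}_l : \uparrow \otimes \downarrow \to I$, satisfying all four yanking (zig-zag) equations. The writhe $W(f)$ of a morphism $f$ is the sum over all crossings (braidings) in its diagram of the sign of the crossing, where the braiding $\sigma$ between two strands of the same orientation counts $+1$ and its inverse $\sigma^{-1}$ counts $-1$ (the standard crossing sign of an oriented crossing). The turning number $T(f)$ is the sum over caps and cups in the diagram of their local turning numbers: $T(\mathrm{cap}_r) = +1$, $T(\mathrm{cap}_l) = -1$, $T(\mathrm{cup}_r) = -1$, $T(\mathrm{cup}_l) = +1$. Both $W$ and $T$ are invariant under the axioms of $\mathbb{ROT}\mathrm{ang}$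 and additive under composition. *)

theory Defs
  imports Main
begin

text \<open>Objects of ROTang are words in the two orientations (Up = the generating
object, Dn = its dual).\<close>

datatype ori = Up | Dn

text \<open>Cross True a c  is the braiding sigma_{a,c} : a c -> c a;
  Cross False a c is the inverse braiding sigma_{c,a}^{-1} : a c -> c a.
  Seq f g means "first f, then g" (i.e. g composed after f).\<close>

datatype diag =
    Id "ori list"
  | Cross bool ori ori
  | CapR | CapL | CupR | CupL
  | Seq diag diag
  | Tens diag diag

fun dom :: "diag \<Rightarrow> ori list" and cod :: "diag \<Rightarrow> ori list" where
  "dom (Id A) = A"
| "dom (Cross s a c) = [a, c]"
| "dom CapR = []"
| "dom CapL = []"
| "dom CupR = [Dn, Up]"
| "dom CupL = [Up, Dn]"
| "dom (Seq f g) = dom f"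
| "dom (Tens f g) = dom f @ dom g"
| "cod (Id A) = A"
| "cod (Cross s a c) = [c, a]"
| "cod CapR = [Up, Dn]"
| "cod CapL = [Dn, Up]"
| "cod CupR = []"
| "cod CupL = []"
| "cod (Seq f g) = cod g"
| "cod (Tens f g) = cod f @ cod g"

fun wf :: "diag \<Rightarrow> bool" where
  "wf (Seq f g) = (wf f \<and> wf g \<and> cod f = dom g)"
| "wf (Tens f g) = (wf f \<and> wf g)"
| "wf _ = True"

definition dtyp :: "diag \<Rightarrow> ori list \<Rightarrow> ori list \<Rightarrow> bool" where
  "dtyp f A B \<longleftrightarrow> wf f \<and> dom f = A \<and> cod f = B"

text \<open>Structural braidings of a word with a single letter (determined by the
hexagon axioms in the strict setting).  For s = True these are the braidings
sigma_{B,c} and sigma_{c,B}; for s = False the corresponding inverse braidings.\<close>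

fun bl :: "bool \<Rightarrow> ori list \<Rightarrow> ori \<Rightarrow> diag" where  
  "bl s [] c = Id [c]"
| "bl s (b # B) c = Seq (Tens (Id [b]) (bl s B c)) (Tens (Cross s b c) (Id B))"

fun br :: "bool \<Rightarrow> ori \<Rightarrow> ori list \<Rightarrow> diag" where  
  "br s c [] = Id [c]"
| "br s c (b # B) = Seq (Tens (Cross s c b) (Id B)) (Tens (Id [b]) (br s c B))"

text \<open>The isotopy relation, typed by source and target.  With gen = False it is
regular isotopy (the axioms of ROTang); with gen = True the Reidemeister I moves
are added (general isotopy).\<close>

inductive tangle_eq :: "bool \<Rightarrow> ori list \<Rightarrow> ori list \<Rightarrow> diag \<Rightarrow> diag \<Rightarrow> bool" where
  refl: "dtyp f A B \<Longrightarrow> tangle_eq gen A B f f"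
| sym: "tangle_eq gen A B f g \<Longrightarrow> tangle_eq gen A B g f"
| trans: "tangle_eq gen A B f g \<Longrightarrow> tangle_eq gen A B g h \<Longrightarrow> tangle_eq gen A B f h"
| seq_cong: "tangle_eq gen A B f f' \<Longrightarrow> tangle_eq gen B C g g' \<Longrightarrow>
    tangle_eq gen A C (Seq f g) (Seq f' g')"
| tens_cong: "tangle_eq gen A B f f' \<Longrightarrow> tangle_eq gen C D g g' \<Longrightarrow>
    tangle_eq gen (A @ C) (B @ D) (Tens f g) (Tens f' g')"
| seq_assoc: "dtyp f A B \<Longrightarrow> dtyp g B C \<Longrightarrow> dtyp h C D \<Longrightarrow>
    tangle_eq gen A D (Seq (Seq f g) h) (Seq f (Seq g h))"
| id_left: "dtyp f A B \<Longrightarrow> tangle_eq gen A B (Seq (Id A) f) f"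
| id_right: "dtyp f A B \<Longrightarrow> tangle_eq gen A B (Seq f (Id B)) f"
| tens_assoc: "dtyp f A B \<Longrightarrow> dtyp g C D \<Longrightarrow> dtyp h E F \<Longrightarrow>
    tangle_eq gen (A @ C @ E) (B @ D @ F) (Tens (Tens f g) h) (Tens f (Tens g h))"
| unit_left: "dtyp f A B \<Longrightarrow> tangle_eq gen A B (Tens (Id []) f) f"
| unit_right: "dtyp f A B \<Longrightarrow> tangle_eq gen A B (Tens f (Id [])) f"
| tens_id: "tangle_eq gen (A @ B) (A @ B) (Tens (Id A) (Id B)) (Id (A @ B))"
| interchange: "dtyp f A B \<Longrightarrow> dtyp g B C \<Longrightarrow> dtyp f' A' B' \<Longrightarrow> dtyp g' B' C' \<Longrightarrow>
    tangle_eq gen (A @ A') (C @ C') (Tens (Seq f g) (Seq f' g')) (Seq (Tens f f') (Tens g g'))"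
| braid_inv1: "tangle_eq gen [a, c] [a, c] (Seq (Cross True a c) (Cross False c a)) (Id [a, c])"
| braid_inv2: "tangle_eq gen [a, c] [a, c] (Seq (Cross False a c) (Cross True c a)) (Id [a, c])"
| nat_left: "dtyp f A B \<Longrightarrow>
    tangle_eq gen (A @ [c]) (c # B) (Seq (Tens f (Id [c])) (bl s B c)) (Seq (bl s A c) (Tens (Id [c]) f))"
| nat_right: "dtyp f A B \<Longrightarrow>
    tangle_eq gen (c # A) (B @ [c]) (Seq (Tens (Id [c]) f) (br s c B)) (Seq (br s c A) (Tens f (Id [c])))"
| yank1: "tangle_eq gen [Up] [Up] (Seq (Tens (Id [Up]) CapL) (Tens CupL (Id [Up]))) (Id [Up])"
| yank2: "tangle_eq gen [Up] [Up] (Seq (Tens CapR (Id [Up])) (Tens (Id [Up]) CupR)) (Id [Up])"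
| yank3: "tangle_eq gen [Dn] [Dn] (Seq (Tens (Id [Dn]) CapR) (Tens CupR (Id [Dn]))) (Id [Dn])"
| yank4: "tangle_eq gen [Dn] [Dn] (Seq (Tens CapL (Id [Dn])) (Tens (Id [Dn]) CupL)) (Id [Dn])"
| r1_right: "tangle_eq True [Up] [Up]
    (Seq (Tens (Id [Up]) CapR) (Seq (Tens (Cross s Up Up) (Id [Dn])) (Tens (Id [Up]) CupL))) (Id [Up])"
| r1_left: "tangle_eq True [Up] [Up]
    (Seq (Tens CapL (Id [Up])) (Seq (Tens (Id [Dn]) (Cross s Up Up)) (Tens CupR (Id [Up])))) (Id [Up])"

text \<open>Writhe: sum of crossing signs.  sigma counts +1 and sigma^{-1} counts -1
when both strands have the same orientation; reversing one strand flips the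
sign (standard oriented crossing sign).\<close>

fun writhe :: "diag \<Rightarrow> int" where
  "writhe (Cross s a c) = (if s then 1 else -1) * (if a = c then 1 else -1)"
| "writhe (Seq f g) = writhe f + writhe g"
| "writhe (Tens f g) = writhe f + writhe g"
| "writhe _ = 0"

fun turning :: "diag \<Rightarrow> int" where
  "turning CapR = 1"
| "turning CapL = -1"
| "turning CupR = -1"
| "turning CupL = 1"
| "turning (Seq f g) = turning f + turning g"
| "turning (Tens f g) = turning f + turning g"
| "turning _ = 0"

end

theory Submission
  imports Defs
begin

text \<open>A curl on an upward strand can be undone by Reidemeister I, yet it contributes
  \<open>\<plusminus>1\<close> to the writhe (by the choice of crossing) and \<open>\<plusminus>2\<close> to the turning number
  (by the side on which it is drawn).  Stacking curls therefore realises every integer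
  combination \<open>u (1, 2) + v (1, -2)\<close>, and these are exactly the pairs \<open>(w, t)\<close> with
  \<open>4 dvd 2 w + t\<close>: take \<open>u = (2 w + t) / 4\<close> and \<open>v = (2 w - t) / 4\<close>.\<close>

lemma tangle_eq_Seq_Id:
  assumes "tangle_eq gen A A f (Id A)" and "tangle_eq gen A A g (Id A)"
  shows "tangle_eq gen A A (Seq f g) (Id A)"
proof -
  have "tangle_eq gen A A (Seq f g) (Seq (Id A) (Id A))"
    using assms by (rule tangle_eq.seq_cong)
  moreover have "tangle_eq gen A A (Seq (Id A) (Id A)) (Id A)"
    by (rule tangle_eq.id_left) (simp add: dtyp_def)
  ultimately show ?thesis
    by (rule tangle_eq.trans)
qed

definition isotopic_to_strand :: "diag \<Rightarrow> bool" where
  "isotopic_to_strand f \<longleftrightarrow> dtyp f [Up] [Up] \<and> tangle_eq True [Up] [Up] f (Id [Up])"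

definition realisable :: "int \<Rightarrow> int \<Rightarrow> bool" where
  "realisable w t \<longleftrightarrow> (\<exists>f. isotopic_to_strand f \<and> writhe f = w \<and> turning f = t)"

lemma realisable_0: "realisable 0 0"
  unfolding realisable_def isotopic_to_strand_def
  by (rule exI[of _ "Id [Up]"]) (simp add: dtyp_def tangle_eq.refl)

lemma realisable_add:
  assumes "realisable a b" and "realisable c d"
  shows "realisable (a + c) (b + d)"
proof -
  obtain f g where "isotopic_to_strand f" "writhe f = a" "turning f = b"
    and "isotopic_to_strand g" "writhe g = c" "turning g = d"
    using assms unfolding realisable_def by blast
  then have "isotopic_to_strand (Seq f g) \<and> writhe (Seq f g) = a + c \<and> turning (Seq f g) = b + d"
    by (simp add: isotopic_to_strand_def dtyp_def tangle_eq_Seq_Id)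
  then show ?thesis
    unfolding realisable_def by blast
qed

lemma realisable_right_curl: "realisable (if s then 1 else -1) 2"
  unfolding realisable_def isotopic_to_strand_def
  using tangle_eq.r1_right[of s]
  by (intro exI[of _ "Seq (Tens (Id [Up]) CapR) (Seq (Tens (Cross s Up Up) (Id [Dn])) (Tens (Id [Up]) CupL))"])
    (simp add: dtyp_def)

lemma realisable_left_curl: "realisable (if s then 1 else -1) (-2)"
  unfolding realisable_def isotopic_to_strand_def
  using tangle_eq.r1_left[of s]
  by (intro exI[of _ "Seq (Tens CapL (Id [Up])) (Seq (Tens (Id [Dn]) (Cross s Up Up)) (Tens CupR (Id [Up])))"])
    (simp add: dtyp_def)

lemma realisable_nat_mult:
  assumes "realisable a b"
  shows "realisable (int n * a) (int n * b)"
proof (induction n)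
  case 0
  then show ?case by (simp add: realisable_0)
next
  case (Suc n)
  then show ?case
    using realisable_add[OF assms Suc.IH] by (simp add: algebra_simps)
qed

lemma realisable_int_mult:
  assumes "realisable a b" and "realisable (- a) (- b)"
  shows "realisable (k * a) (k * b)"
proof (cases "k \<ge> 0")
  case True
  then show ?thesis
    using realisable_nat_mult[OF assms(1), of "nat k"] by simp
next
  case False
  then show ?thesis
    using realisable_nat_mult[OF assms(2), of "nat (- k)"] by simp
qed

theorem mainTheorem1:
  fixes w t :: int
  assumes "4 dvd (2 * w + t)"
  shows "\<exists>f. dtyp f [Up] [Up] \<and> writhe f = w \<and> turning f = t \<and>
           tangle_eq True [Up] [Up] f (Id [Up])"
proof -
  obtain u where u: "2 * w + t = 4 * u"
    using assms by blast
  have "4 dvd (2 * w - t)"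
    using assms by presburger
  then obtain v where v: "2 * w - t = 4 * v"
    by blast
  have "realisable (u * 1) (u * 2)"
    using realisable_right_curl[of True] realisable_left_curl[of False]
    by (intro realisable_int_mult) simp_all
  moreover have "realisable (v * 1) (v * -2)"
    using realisable_left_curl[of True] realisable_right_curl[of False]
    by (intro realisable_int_mult) simp_all
  ultimately have "realisable (u * 1 + v * 1) (u * 2 + v * -2)"
    by (rule realisable_add)
  moreover have "u * 1 + v * 1 = w" and "u * 2 + v * -2 = t"
    using u v by linarith+
  ultimately have "realisable w t"
    by simp
  then show ?thesis
    unfolding realisable_def isotopic_to_strand_def by blast
qed

end
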